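(* Let $N\ge 1$ be an integer, let $\gamma>0$, $\upsilon\in(0,1]$, $P_b>0$, $h>0$, $T>0$, and let $p_1>p_2>\cdots>p_N>0$ with $p_1\le1$. Consider Problem P2: minimize $\sum_{k=1}^N \gamma p_k f_k^2$ over $(f_1,\dots,f_N,y_1,\dots,y_N)$ subject to $\sum_{k=1}^m \gamma f_k^2 \le \upsilon P_b h \sum_{k=1}^m y_k$ for $m=1,\dots,N$, $\sum_{k=1}^N y_k\le T$, and $f_k>0$, $\frac{1}{f_k}-y_k\le 0$ for all $k$; Problem P3: the same problem with the first $N-1$ energy harvesting constraints removed, i.e. minimize $\sum_{k=1}^N \gamma p_k f_k^2$ subject to $\sum_{k=1}^N \gamma f_k^2 \le \upsilon P_b h \sum_{k=1}^N y_k$, $\sum_{k=1}^N y_k\le T$, and $f_k>0$, $\frac{1}{f_k}-y_k\le 0$ for all $k$. Then the solution of Problem P2 can be obtained by solving Problem P3: an optimal solution of P3 is an optimal solution of P2.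
   Context: $f_k$ is the CPU frequency of the $k$-th cycle, $p_k$ the probability that the $k$-th cycle is executed (decreasing in $k$), $\gamma f^2$ the energy per cycle at frequency $f$, $\upsilon P_b h$ the harvested power and $T$ the deadline. *)

theory Defs
  imports Complex_Main
begin

definition objective :: "nat \<Rightarrow> real \<Rightarrow> (nat \<Rightarrow> real) \<Rightarrow> (nat \<Rightarrow> real) \<Rightarrow> real" where
  "objective N \<gamma> p f = (\<Sum>k=1..N. \<gamma> * p k * (f k)^2)"

definition feasible_P2 :: "nat \<Rightarrow> real \<Rightarrow> real \<Rightarrow> real \<Rightarrow> real \<Rightarrow> real \<Rightarrow>
    (nat \<Rightarrow> real) \<Rightarrow> (nat \<Rightarrow> real) \<Rightarrow> bool" where
  "feasible_P2 N \<gamma> \<upsilon> Pb h T f y \<longleftrightarrow>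
     (\<forall>m\<in>{1..N}. (\<Sum>k=1..m. \<gamma> * (f k)^2) \<le> \<upsilon> * Pb * h * (\<Sum>k=1..m. y k)) \<and>
     (\<Sum>k=1..N. y k) \<le> T \<and>
     (\<forall>k\<in>{1..N}. f k > 0 \<and> 1 / f k - y k \<le> 0)"

definition feasible_P3 :: "nat \<Rightarrow> real \<Rightarrow> real \<Rightarrow> real \<Rightarrow> real \<Rightarrow> real \<Rightarrow>
    (nat \<Rightarrow> real) \<Rightarrow> (nat \<Rightarrow> real) \<Rightarrow> bool" where
  "feasible_P3 N \<gamma> \<upsilon> Pb h T f y \<longleftrightarrow>
     (\<Sum>k=1..N. \<gamma> * (f k)^2) \<le> \<upsilon> * Pb * h * (\<Sum>k=1..N. y k) \<and>
     (\<Sum>k=1..N. y k) \<le> T \<and>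
     (\<forall>k\<in>{1..N}. f k > 0 \<and> 1 / f k - y k \<le> 0)"

definition optimal_P2 where
  "optimal_P2 N \<gamma> \<upsilon> Pb h T p f y \<longleftrightarrow> feasible_P2 N \<gamma> \<upsilon> Pb h T f y \<and>
     (\<forall>f' y'. feasible_P2 N \<gamma> \<upsilon> Pb h T f' y' \<longrightarrow> objective N \<gamma> p f \<le> objective N \<gamma> p f')"

definition optimal_P3 where
  "optimal_P3 N \<gamma> \<upsilon> Pb h T p f y \<longleftrightarrow> feasible_P3 N \<gamma> \<upsilon> Pb h T f y \<and>
     (\<forall>f' y'. feasible_P3 N \<gamma> \<upsilon> Pb h T f' y' \<longrightarrow> objective N \<gamma> p f \<le> objective N \<gamma> p f')"

end

theory Submission
  imports Defs
begin

text \<open>Every P2-feasible point is P3-feasible, so it suffices to show that an optimal point of P3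
  satisfies all prefix constraints of P2. Optimality forces \<open>y\<^sub>k = 1/f\<^sub>k\<close> (otherwise \<open>f\<^sub>k\<close> could
  be lowered) and \<open>f\<^sub>1 \<le> \<dots> \<le> f\<^sub>N\<close> (otherwise swapping two cycles lowers the objective, since the
  \<open>p\<^sub>k\<close> decrease). Hence the per-cycle surplus \<open>\<gamma> f\<^sub>k\<^sup>2 - \<upsilon> P\<^sub>b h / f\<^sub>k\<close> is nondecreasing in \<open>k\<close>:
  once a cycle consumes more than it harvests, so do all later ones, and a violated prefix
  constraint would propagate to the total constraint of P3.\<close>

lemma sum_agree_off_point:
  fixes g g' :: "'a \<Rightarrow> 'b::ab_group_add"
  assumes "finite A" "i \<in> A" and "\<And>k. k \<in> A \<Longrightarrow> k \<noteq> i \<Longrightarrow> g' k = g k"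
  shows "sum g' A = sum g A - g i + g' i"
proof -
  have "sum g' (A - {i}) = sum g (A - {i})"
    using assms(3) by (intro sum.cong) auto
  then show ?thesis
    using sum.remove[OF assms(1,2), of g] sum.remove[OF assms(1,2), of g'] by simp
qed

lemma sum_agree_off_two_points:
  fixes g g' :: "'a \<Rightarrow> 'b::ab_group_add"
  assumes "finite A" "i \<in> A" "j \<in> A" "i \<noteq> j"
    and "\<And>k. k \<in> A \<Longrightarrow> k \<noteq> i \<Longrightarrow> k \<noteq> j \<Longrightarrow> g' k = g k"
  shows "sum g' A = sum g A - g i - g j + g' i + g' j"
proof -
  define g'' where "g'' = g'(j := g j)"
  have "sum g'' A = sum g A - g i + g'' i"
    using assms by (intro sum_agree_off_point) (auto simp: g''_def)
  moreover have "sum g' A = sum g'' A - g'' j + g' j"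
    using assms(1,3) by (intro sum_agree_off_point) (auto simp: g''_def)
  ultimately show ?thesis
    using \<open>i \<noteq> j\<close> by (simp add: g''_def)
qed

lemma strict_antimono_on_interval:
  fixes p :: "nat \<Rightarrow> 'a::order"
  assumes "\<forall>k\<in>{a..<b}. p k > p (Suc k)"
  shows "a \<le> i \<Longrightarrow> i < j \<Longrightarrow> j \<le> b \<Longrightarrow> p i > p j"
proof (induction j)
  case (Suc j)
  have "p j > p (Suc j)"
    using assms Suc.prems by auto
  with Suc show ?case
    by (cases "i = j") auto
qed simp

lemma prefix_sums_le_if_surplus_persists:
  fixes g h :: "nat \<Rightarrow> 'a::linordered_ab_group_add"
  assumes total: "(\<Sum>k=1..N. g k) \<le> (\<Sum>k=1..N. h k)"
    and persists: "\<And>i j. 1 \<le> i \<Longrightarrow> i < j \<Longrightarrow> j \<le> N \<Longrightarrow> h i < g i \<Longrightarrow> h j \<le> g j"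
    and "m \<le> N"
  shows "(\<Sum>k=1..m. g k) \<le> (\<Sum>k=1..m. h k)"
proof (rule ccontr)
  assume violated: "\<not> ?thesis"
  obtain i where "i \<in> {1..m}" and "h i < g i"
    using violated sum_mono[of "{1..m}" g h] by (meson not_le_imp_less)
  then have "(\<Sum>k=Suc m..N. h k) \<le> (\<Sum>k=Suc m..N. g k)"
    by (intro sum_mono persists) auto
  moreover have "sum u {1..N} = sum u {1..m} + sum u {Suc m..N}" for u :: "nat \<Rightarrow> 'a"
    using sum.ub_add_nat[of 1 m u "N - m"] \<open>m \<le> N\<close> by simp
  ultimately show False
    using violated total by (metis add_less_le_mono not_le)
qed

lemma feasible_P2_imp_feasible_P3:
  "feasible_P2 N \<gamma> \<upsilon> Pb h T f y \<Longrightarrow> feasible_P3 N \<gamma> \<upsilon> Pb h T f y"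
  unfolding feasible_P2_def feasible_P3_def by (cases "N = 0") auto

lemma optimal_P3_tight:
  assumes opt: "optimal_P3 N \<gamma> \<upsilon> Pb h T p f y" and "\<gamma> > 0" and k: "k \<in> {1..N}" and "p k > 0"
  shows "y k = 1 / f k"
proof (rule ccontr)
  assume "y k \<noteq> 1 / f k"
  moreover have "f k > 0" "1 / f k - y k \<le> 0"
    using opt k unfolding optimal_P3_def feasible_P3_def by auto
  ultimately have "1 / f k < y k"
    by simp
  moreover have "1 / f k > 0"
    using \<open>f k > 0\<close> by simp
  ultimately have "y k > 0"
    by linarith
  then have "1 / y k < f k"
    using \<open>1 / f k < y k\<close> \<open>f k > 0\<close> by (simp add: field_simps)
  then have smaller: "(1 / y k)^2 < (f k)^2"
    using \<open>y k > 0\<close> by (intro power_strict_mono) auto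
  define f' where "f' = f(k := 1 / y k)"
  have energy: "(\<Sum>j=1..N. \<gamma> * (f' j)^2) = (\<Sum>j=1..N. \<gamma> * (f j)^2) - \<gamma> * (f k)^2 + \<gamma> * (1 / y k)^2"
    using sum_agree_off_point[of "{1..N}" k "\<lambda>j. \<gamma> * (f j)^2" "\<lambda>j. \<gamma> * (f' j)^2"] k
    by (simp add: f'_def)
  have "feasible_P3 N \<gamma> \<upsilon> Pb h T f' y"
  proof -
    have "(\<Sum>j=1..N. \<gamma> * (f' j)^2) \<le> (\<Sum>j=1..N. \<gamma> * (f j)^2)"
      unfolding energy using smaller \<open>\<gamma> > 0\<close> by simp
    moreover have "f' j > 0 \<and> 1 / f' j - y j \<le> 0" if "j \<in> {1..N}" for j
      using opt that \<open>y k > 0\<close> unfolding optimal_P3_def feasible_P3_def f'_def by auto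
    ultimately show ?thesis
      using opt unfolding optimal_P3_def feasible_P3_def by auto
  qed
  moreover have "objective N \<gamma> p f' = objective N \<gamma> p f - \<gamma> * p k * (f k)^2 + \<gamma> * p k * (1 / y k)^2"
    unfolding objective_def
    using sum_agree_off_point[of "{1..N}" k "\<lambda>j. \<gamma> * p j * (f j)^2" "\<lambda>j. \<gamma> * p j * (f' j)^2"] k
    by (simp add: f'_def)
  moreover have "\<gamma> * p k * (1 / y k)^2 < \<gamma> * p k * (f k)^2"
    using smaller \<open>\<gamma> > 0\<close> \<open>p k > 0\<close> by simp
  ultimately show False
    using opt unfolding optimal_P3_def by fastforce
qed

lemma optimal_P3_mono:
  assumes opt: "optimal_P3 N \<gamma> \<upsilon> Pb h T p f y" and "\<gamma> > 0"
    and ij: "1 \<le> i" "i < j" "j \<le> N" and "p j < p i"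
  shows "f i \<le> f j"
proof (rule ccontr)
  assume "\<not> f i \<le> f j"
  moreover have "f j > 0"
    using opt ij unfolding optimal_P3_def feasible_P3_def by auto
  ultimately have smaller: "(f j)^2 < (f i)^2"
    by (intro power_strict_mono) auto
  define f' where "f' = f(i := f j, j := f i)"
  define y' where "y' = y(i := y j, j := y i)"
  have ijN: "i \<in> {1..N}" "j \<in> {1..N}" "i \<noteq> j"
    using ij by auto
  have "(\<Sum>k=1..N. \<gamma> * (f' k)^2) = (\<Sum>k=1..N. \<gamma> * (f k)^2)"
    using sum_agree_off_two_points[of "{1..N}" i j "\<lambda>k. \<gamma> * (f k)^2" "\<lambda>k. \<gamma> * (f' k)^2"] ijN
    by (simp add: f'_def)
  moreover have "(\<Sum>k=1..N. y' k) = (\<Sum>k=1..N. y k)"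
    using sum_agree_off_two_points[of "{1..N}" i j y y'] ijN by (simp add: y'_def)
  ultimately have "feasible_P3 N \<gamma> \<upsilon> Pb h T f' y'"
    using opt ijN unfolding optimal_P3_def feasible_P3_def by (auto simp: f'_def y'_def)
  moreover have "objective N \<gamma> p f' = objective N \<gamma> p f - \<gamma> * p i * (f i)^2 - \<gamma> * p j * (f j)^2
      + \<gamma> * p i * (f j)^2 + \<gamma> * p j * (f i)^2"
    unfolding objective_def
    using sum_agree_off_two_points[of "{1..N}" i j "\<lambda>k. \<gamma> * p k * (f k)^2" "\<lambda>k. \<gamma> * p k * (f' k)^2"] ijN
    by (simp add: f'_def)
  moreover have "\<gamma> * p i * (f j)^2 + \<gamma> * p j * (f i)^2 < \<gamma> * p i * (f i)^2 + \<gamma> * p j * (f j)^2"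
  proof -
    have "0 < (p i - p j) * ((f i)^2 - (f j)^2)"
      using smaller \<open>p j < p i\<close> by (intro mult_pos_pos) auto
    then have "0 < \<gamma> * ((p i - p j) * ((f i)^2 - (f j)^2))"
      using \<open>\<gamma> > 0\<close> by simp
    then show ?thesis
      by (simp add: algebra_simps)
  qed
  ultimately show False
    using opt unfolding optimal_P3_def by fastforce
qed

lemma optimal_P3_imp_feasible_P2:
  assumes opt: "optimal_P3 N \<gamma> \<upsilon> Pb h T p f y" and "\<gamma> > 0" and "\<upsilon> * Pb * h \<ge> 0"
    and ppos: "\<And>k. k \<in> {1..N} \<Longrightarrow> p k > 0"
    and pdec: "\<And>i j. 1 \<le> i \<Longrightarrow> i < j \<Longrightarrow> j \<le> N \<Longrightarrow> p j < p i"
  shows "feasible_P2 N \<gamma> \<upsilon> Pb h T f y"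
proof -
  define c where "c = \<upsilon> * Pb * h"
  have feas: "feasible_P3 N \<gamma> \<upsilon> Pb h T f y"
    using opt unfolding optimal_P3_def by simp
  have tight: "y k = 1 / f k" if "k \<in> {1..N}" for k
    using optimal_P3_tight[OF opt \<open>\<gamma> > 0\<close> that ppos[OF that]] .
  have persists: "c * y j \<le> \<gamma> * (f j)^2"
    if ij: "1 \<le> i" "i < j" "j \<le> N" and surplus: "c * y i < \<gamma> * (f i)^2" for i j
  proof -
    have "f i \<le> f j" "f i > 0"
      using optimal_P3_mono[OF opt \<open>\<gamma> > 0\<close> ij pdec[OF ij]] feas ij
      unfolding feasible_P3_def by auto
    then have "c / f j \<le> c / f i" and "\<gamma> * (f i)^2 \<le> \<gamma> * (f j)^2"
      using \<open>\<gamma> > 0\<close> \<open>\<upsilon> * Pb * h \<ge> 0\<close> by (auto simp: c_def frac_le power_mono)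
    then show ?thesis
      using surplus tight[of i] tight[of j] ij by simp
  qed
  have "(\<Sum>k=1..m. \<gamma> * (f k)^2) \<le> c * (\<Sum>k=1..m. y k)" if "m \<in> {1..N}" for m
    using prefix_sums_le_if_surplus_persists[where g = "\<lambda>k. \<gamma> * (f k)^2" and h = "\<lambda>k. c * y k", OF _ persists]
      feas that unfolding feasible_P3_def c_def by (auto simp: sum_distrib_left)
  then show ?thesis
    using feas unfolding feasible_P2_def feasible_P3_def c_def by blast
qed

theorem lemma3:
  fixes N :: nat and \<gamma> \<upsilon> Pb h T :: real and p f y :: "nat \<Rightarrow> real"
  assumes "N \<ge> 1" and "\<gamma> > 0" and "0 < \<upsilon>" and "\<upsilon> \<le> 1" and "Pb > 0" and "h > 0" and "T > 0"
    and "\<forall>k\<in>{1..<N}. p k > p (Suc k)" and "p N > 0" and "p 1 \<le> 1"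
    and "optimal_P3 N \<gamma> \<upsilon> Pb h T p f y"
  shows "optimal_P2 N \<gamma> \<upsilon> Pb h T p f y"
proof -
  have pdec: "p j < p i" if "1 \<le> i" "i < j" "j \<le> N" for i j
    using strict_antimono_on_interval[OF assms(8)] that by blast
  have ppos: "p k > 0" if "k \<in> {1..N}" for k
    using pdec[of k N] that \<open>p N > 0\<close> by (cases "k = N") auto
  have "feasible_P2 N \<gamma> \<upsilon> Pb h T f y"
    using optimal_P3_imp_feasible_P2[OF assms(11) \<open>\<gamma> > 0\<close> _ ppos pdec] assms(3,5,6) by simp
  then show ?thesis
    using assms(11) feasible_P2_imp_feasible_P3
    unfolding optimal_P2_def optimal_P3_def by blast
qed

end
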